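(* Let $Q_1,\ldots,Q_n$ be positive definite real symmetric $n\times n$ matrices with $\sum_{i=1}^n\operatorname{tr}Q_i=n$. Let $H=\{x\in\mathbb R^n:\sum_i x_i=0\}$ and $f:H\to\mathbb R$, $f(x_1,\ldots,x_n)=\ln\det\left(\sum_{i=1}^n e^{x_i}Q_i\right)$, and let $(\xi_1,\ldots,\xi_n)\in H$ be a point at which $f$ attains its minimum on $H$. Let $S$ be an $n\times n$ matrix with $S^*S=\sum_{i=1}^n e^{\xi_i}Q_i$, let $T=S^{-1}$, $\tau_i=e^{\xi_i}$ and $B_i=\tau_iT^*Q_iT$ for $i=1,\ldots,n$. Then $$D(B_1,\ldots,B_n)\ \ge\ D(Q_1,\ldots,Q_n).$$
   Context: For real symmetric $n\times n$ matrices $Q_1,\ldots,Q_n$, the mixed discriminant is $D(Q_1,\ldots,Q_n)=\frac{\partial^n}{\partial t_1\cdots\partial t_n}\det(t_1Q_1+\cdots+t_nQ_n)$. $S^*$ denotes the transpose of $S$. (It is known that $f$ is strictly convex on $H$ and attains its minimum at a unique point, and then $(B_1,\ldots,B_n)$ is doubly stochastic.) *)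

theory Defs
  imports "HOL-Analysis.Analysis"
begin

definition partial_coord :: "'n::finite \<Rightarrow> (real^'n \<Rightarrow> real) \<Rightarrow> (real^'n \<Rightarrow> real)" where
  "partial_coord i g = (\<lambda>x. deriv (\<lambda>s. g (x + s *\<^sub>R axis i 1)) 0)"

definition all_indices :: "'n::finite list" where
  "all_indices = (SOME xs. distinct xs \<and> set xs = UNIV)"

text \<open>Mixed discriminant: the mixed partial derivative d^n/(dt_1...dt_n) of
  det(t_1 Q_1 + ... + t_n Q_n); it is a constant (the polynomial is homogeneous
  of degree n), we evaluate it at t = 0.\<close>
definition mixed_discr :: "('n::finite \<Rightarrow> real^'n^'n) \<Rightarrow> real" where
  "mixed_discr Q =
     foldr partial_coord (all_indices :: 'n list)
       (\<lambda>t. det (\<Sum>i\<in>UNIV. t $ i *\<^sub>R Q i)) 0"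

definition pos_def_sym :: "real^'n^'n \<Rightarrow> bool" where
  "pos_def_sym A \<longleftrightarrow> transpose A = A \<and> (\<forall>x. x \<noteq> 0 \<longrightarrow> x \<bullet> (A *v x) > 0)"

end

theory Submission
  imports Defs
begin

text \<open>
  The mixed discriminant is the coefficient of \<open>t\<^sub>1\<cdots>t\<^sub>n\<close> in the polynomial
  \<open>det (\<Sum>i. t\<^sub>i Q\<^sub>i)\<close>. Substituting \<open>t\<^sub>i \<mapsto> \<tau>\<^sub>i t\<^sub>i\<close> and conjugating with \<open>T\<close> therefore gives
  \<open>D(B) = (\<Prod>i. \<tau>\<^sub>i) (det T)\<^sup>2 D(Q) = D(Q) / det (\<Sum>i. \<tau>\<^sub>i Q\<^sub>i)\<close>, because
  \<open>\<Prod>i. \<tau>\<^sub>i = exp (\<Sum>i. \<xi>\<^sub>i) = 1\<close>. Comparing the minimum with \<open>0 \<in> H\<close> and applying AM-GM to the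
  eigenvalues of \<open>\<Sum>i. Q\<^sub>i\<close> yields \<open>det (\<Sum>i. \<tau>\<^sub>i Q\<^sub>i) \<le> det (\<Sum>i. Q\<^sub>i) \<le> (tr (\<Sum>i. Q\<^sub>i) / n)\<^sup>n = 1\<close>.
  Finally \<open>D(Q) \<ge> 0\<close>: writing each \<open>Q\<^sub>i\<close> as a Gram matrix exhibits \<open>D(Q)\<close> as a sum of
  squared determinants.
\<close>

section \<open>The mixed discriminant as a coefficient\<close>

definition vec_monom :: "('n::finite \<Rightarrow> nat) \<Rightarrow> real^'n \<Rightarrow> real" where
  "vec_monom c t = (\<Prod>j\<in>UNIV. t $ j ^ c j)"

text \<open>A polynomial in \<open>t \<in> \<real>\<^sup>n\<close>, given by a finite family \<open>M\<close> of terms with coefficients \<open>a\<close> and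
  exponent vectors \<open>c\<close>; exponent vectors may repeat.\<close>

definition monom_sum :: "'m set \<Rightarrow> ('m \<Rightarrow> real) \<Rightarrow> ('m \<Rightarrow> 'n::finite \<Rightarrow> nat) \<Rightarrow> real^'n \<Rightarrow> real" where
  "monom_sum M a c t = (\<Sum>m\<in>M. a m * vec_monom (c m) t)"

lemma vec_monom_add_axis:
  "vec_monom c (x + s *\<^sub>R axis i 1) = (x $ i + s) ^ c i * (\<Prod>j\<in>UNIV - {i}. x $ j ^ c j)"
proof -
  have "vec_monom c (x + s *\<^sub>R axis i 1) =
      (x + s *\<^sub>R axis i 1) $ i ^ c i * (\<Prod>j\<in>UNIV - {i}. (x + s *\<^sub>R axis i 1) $ j ^ c j)"
    unfolding vec_monom_def by (rule prod.remove) simp_all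
  also have "\<dots> = (x $ i + s) ^ c i * (\<Prod>j\<in>UNIV - {i}. x $ j ^ c j)"
    by (auto simp: axis_def intro!: prod.cong)
  finally show ?thesis .
qed

lemma has_real_derivative_vec_monom_axis:
  "((\<lambda>s. vec_monom c (x + s *\<^sub>R axis i 1)) has_real_derivative
      real (c i) * vec_monom (c(i := c i - 1)) x) (at 0)"
proof -
  have lowered: "vec_monom (c(i := c i - 1)) x = x $ i ^ (c i - 1) * (\<Prod>j\<in>UNIV - {i}. x $ j ^ c j)"
    using vec_monom_add_axis[of "c(i := c i - 1)" x 0 i] by (auto intro!: prod.cong)
  have "((\<lambda>s. (x $ i + s) ^ c i * (\<Prod>j\<in>UNIV - {i}. x $ j ^ c j)) has_real_derivative
      (real (c i) * (x $ i + 0) ^ (c i - 1) * 1) * (\<Prod>j\<in>UNIV - {i}. x $ j ^ c j)) (at 0)"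
    by (intro derivative_eq_intros) auto
  then show ?thesis
    unfolding vec_monom_add_axis lowered by (simp add: mult.assoc)
qed

lemma partial_coord_monom_sum:
  assumes "finite M"
  shows "partial_coord i (monom_sum M a c) =
    monom_sum M (\<lambda>m. a m * real (c m i)) (\<lambda>m. (c m)(i := c m i - 1))"
proof
  fix x
  have "((\<lambda>s. monom_sum M a c (x + s *\<^sub>R axis i 1)) has_real_derivative
      (\<Sum>m\<in>M. a m * (real (c m i) * vec_monom ((c m)(i := c m i - 1)) x))) (at 0)"
    unfolding monom_sum_def by (intro DERIV_sum DERIV_cmult has_real_derivative_vec_monom_axis)
  then show "partial_coord i (monom_sum M a c) x =
      monom_sum M (\<lambda>m. a m * real (c m i)) (\<lambda>m. (c m)(i := c m i - 1)) x"
    unfolding partial_coord_def by (simp add: DERIV_imp_deriv monom_sum_def mult.assoc)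
qed

lemma foldr_partial_coord_monom_sum:
  assumes "finite M" "distinct xs"
  shows "foldr partial_coord xs (monom_sum M a c) =
    monom_sum M (\<lambda>m. a m * (\<Prod>i\<in>set xs. real (c m i)))
      (\<lambda>m j. if j \<in> set xs then c m j - 1 else c m j)"
  using assms(2)
proof (induction xs)
  case Nil
  then show ?case by (simp add: monom_sum_def)
next
  case (Cons i xs)
  then have "i \<notin> set xs" by simp
  then have "(\<lambda>m. a m * (\<Prod>i\<in>set xs. real (c m i)) * real (c m i)) =
        (\<lambda>m. a m * (\<Prod>i\<in>set (i # xs). real (c m i)))"
      "(\<lambda>m. (\<lambda>j. if j \<in> set xs then c m j - 1 else c m j)(i := c m i - 1)) =
        (\<lambda>m j. if j \<in> set (i # xs) then c m j - 1 else c m j)"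
    by (auto simp: fun_eq_iff mult_ac)
  with Cons show ?case
    by (simp add: partial_coord_monom_sum[OF assms(1)])
qed

lemma distinct_set_all_indices: "distinct (all_indices :: 'n::finite list) \<and> set (all_indices :: 'n list) = UNIV"
proof -
  obtain xs :: "'n list" where "distinct xs \<and> set xs = UNIV"
    using finite_distinct_list[of "UNIV :: 'n set"] by auto
  then show ?thesis
    unfolding all_indices_def by (rule someI)
qed

lemma prod_of_nat_mult_zero_power:
  "(\<Prod>j\<in>(UNIV :: 'n::finite set). real (c j) * (0::real) ^ (c j - 1)) = (if \<forall>j. c j = 1 then 1 else 0)"
proof (cases "\<forall>j. c j = 1")
  case False
  then obtain j where "c j \<noteq> 1" by auto
  then have "real (c j) * (0::real) ^ (c j - 1) = 0" by (cases "c j") auto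
  with False show ?thesis by (auto intro: prod_zero)
qed simp

lemma mixed_discr_monom_sum:
  fixes X :: "'n::finite \<Rightarrow> real^'n^'n"
  assumes "finite M" and "(\<lambda>t. det (\<Sum>i\<in>UNIV. t $ i *\<^sub>R X i)) = monom_sum M a c"
  shows "mixed_discr X = (\<Sum>m\<in>M. if \<forall>j. c m j = 1 then a m else 0)"
proof -
  have "mixed_discr X = foldr partial_coord (all_indices :: 'n list) (monom_sum M a c) 0"
    unfolding mixed_discr_def assms(2) ..
  also have "\<dots> = (\<Sum>m\<in>M. a m * (\<Prod>j\<in>UNIV. real (c m j) * (0::real) ^ (c m j - 1)))"
    using distinct_set_all_indices[where 'n = 'n]
    by (simp add: foldr_partial_coord_monom_sum[OF assms(1)] monom_sum_def vec_monom_def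
        prod.distrib mult.assoc)
  also have "\<dots> = (\<Sum>m\<in>M. if \<forall>j. c m j = 1 then a m else 0)"
    by (simp only: prod_of_nat_mult_zero_power) (auto intro!: sum.cong)
  finally show ?thesis .
qed

lemma prod_vec_comp_eq_vec_monom:
  fixes t :: "real^'n::finite" and \<pi> :: "'n \<Rightarrow> 'n"
  shows "(\<Prod>k\<in>UNIV. t $ \<pi> k) = vec_monom (\<lambda>j. card {k. \<pi> k = j}) t"
proof -
  have "(\<Prod>k\<in>UNIV. t $ \<pi> k) = (\<Prod>j\<in>UNIV. \<Prod>k\<in>{k\<in>UNIV. \<pi> k = j}. t $ \<pi> k)"
    by (rule prod.group[where T = UNIV, symmetric]) auto
  also have "\<dots> = (\<Prod>j\<in>UNIV. t $ j ^ card {k. \<pi> k = j})"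
    by (intro prod.cong refl) simp
  finally show ?thesis by (simp add: vec_monom_def)
qed

text \<open>Multilinear expansion of the Leibniz formula: the monomial indexed by \<open>(\<sigma>, \<pi>)\<close> takes
  row \<open>k\<close> from the matrix \<open>X (\<pi> k)\<close>.\<close>

lemma det_sum_scaleR_eq_monom_sum:
  fixes X :: "'n::finite \<Rightarrow> real^'n^'n"
  shows "(\<lambda>t. det (\<Sum>i\<in>UNIV. t $ i *\<^sub>R X i)) =
    monom_sum ({\<sigma>. \<sigma> permutes UNIV} \<times> UNIV)
      (\<lambda>(\<sigma>, \<pi>). of_int (sign \<sigma>) * (\<Prod>k\<in>UNIV. X (\<pi> k) $ k $ \<sigma> k))
      (\<lambda>(\<sigma>, \<pi>) j. card {k. \<pi> k = j})"
proof
  fix t :: "real^'n"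
  have "det (\<Sum>i\<in>UNIV. t $ i *\<^sub>R X i) = (\<Sum>\<sigma>\<in>{\<sigma>. \<sigma> permutes UNIV}. of_int (sign \<sigma>) *
      (\<Prod>k\<in>UNIV. \<Sum>i\<in>UNIV. t $ i * X i $ k $ \<sigma> k))"
    by (simp add: det_def)
  also have "\<dots> = (\<Sum>\<sigma>\<in>{\<sigma>. \<sigma> permutes UNIV}. of_int (sign \<sigma>) *
      (\<Sum>\<pi>\<in>UNIV. \<Prod>k\<in>UNIV. t $ \<pi> k * X (\<pi> k) $ k $ \<sigma> k))"
    by (subst prod_sum_PiE) auto
  also have "\<dots> = (\<Sum>\<sigma>\<in>{\<sigma>. \<sigma> permutes UNIV}. \<Sum>\<pi>\<in>UNIV.
      of_int (sign \<sigma>) * (\<Prod>k\<in>UNIV. X (\<pi> k) $ k $ \<sigma> k) * vec_monom (\<lambda>j. card {k. \<pi> k = j}) t)"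
    by (simp add: sum_distrib_left prod.distrib prod_vec_comp_eq_vec_monom mult_ac)
  also have "\<dots> = monom_sum ({\<sigma>. \<sigma> permutes UNIV} \<times> UNIV)
      (\<lambda>(\<sigma>, \<pi>). of_int (sign \<sigma>) * (\<Prod>k\<in>UNIV. X (\<pi> k) $ k $ \<sigma> k))
      (\<lambda>(\<sigma>, \<pi>) j. card {k. \<pi> k = j}) t"
    unfolding monom_sum_def sum.cartesian_product by (rule sum.cong) auto
  finally show "det (\<Sum>i\<in>UNIV. t $ i *\<^sub>R X i) = \<dots>" .
qed

lemma card_fibres_eq_1_iff_permutes:
  "(\<forall>j. card {k. \<pi> k = j} = 1) \<longleftrightarrow> \<pi> permutes (UNIV :: 'n::finite set)"
proof -
  have "card {k. \<pi> k = j} = 1 \<longleftrightarrow> (\<exists>!k. \<pi> k = j)" for j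
    by (auto simp: card_1_singleton_iff Ex1_def)
  then show ?thesis by (simp add: permutes_univ)
qed

lemma mixed_discr_permutation_expansion:
  fixes X :: "'n::finite \<Rightarrow> real^'n^'n"
  shows "mixed_discr X = (\<Sum>\<pi>\<in>{\<pi>. \<pi> permutes UNIV}. \<Sum>\<sigma>\<in>{\<sigma>. \<sigma> permutes UNIV}.
    of_int (sign \<sigma>) * (\<Prod>k\<in>UNIV. X (\<pi> k) $ k $ \<sigma> k))"
proof -
  have "mixed_discr X = (\<Sum>m\<in>{\<sigma>. \<sigma> permutes UNIV} \<times> UNIV.
      if \<forall>j. (\<lambda>(\<sigma>, \<pi>) j. card {k. \<pi> k = j}) m j = 1
      then (\<lambda>(\<sigma>, \<pi>). of_int (sign \<sigma>) * (\<Prod>k\<in>UNIV. X (\<pi> k) $ k $ \<sigma> k)) m else 0)"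
    by (rule mixed_discr_monom_sum[OF _ det_sum_scaleR_eq_monom_sum]) simp
  also have "\<dots> = (\<Sum>\<sigma>\<in>{\<sigma>. \<sigma> permutes UNIV}. \<Sum>\<pi>\<in>UNIV.
      if \<pi> permutes UNIV then of_int (sign \<sigma>) * (\<Prod>k\<in>UNIV. X (\<pi> k) $ k $ \<sigma> k) else 0)"
    unfolding sum.cartesian_product
    by (intro sum.cong refl) (simp only: split_beta card_fibres_eq_1_iff_permutes)
  also have "\<dots> = (\<Sum>\<sigma>\<in>{\<sigma>. \<sigma> permutes UNIV}. \<Sum>\<pi>\<in>{\<pi>. \<pi> permutes UNIV}.
      of_int (sign \<sigma>) * (\<Prod>k\<in>UNIV. X (\<pi> k) $ k $ \<sigma> k))"
    by (simp add: sum.inter_filter[symmetric])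
  also have "\<dots> = (\<Sum>\<pi>\<in>{\<pi>. \<pi> permutes UNIV}. \<Sum>\<sigma>\<in>{\<sigma>. \<sigma> permutes UNIV}.
      of_int (sign \<sigma>) * (\<Prod>k\<in>UNIV. X (\<pi> k) $ k $ \<sigma> k))"
    by (rule sum.swap)
  finally show ?thesis .
qed

section \<open>Scaling and congruence\<close>

lemma monom_sum_scale:
  "monom_sum M a c (\<chi> i. \<tau> i * t $ i) =
    monom_sum M (\<lambda>m. a m * (\<Prod>j\<in>UNIV. \<tau> j ^ c m j)) c (t :: real^'n::finite)"
  by (simp add: monom_sum_def vec_monom_def power_mult_distrib prod.distrib mult_ac)

lemma matrix_add_rdistrib: "(A + B) ** C = A ** C + B ** C"
  by (simp add: vec_eq_iff matrix_matrix_mult_def sum.distrib distrib_right)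

lemma matrix_mult_sum_scaleR_mult:
  fixes A :: "real^'n::finite^'m::finite" and X :: "'i \<Rightarrow> real^'k::finite^'n" and C :: "real^'l::finite^'k"
  shows "A ** (\<Sum>i\<in>I. c i *\<^sub>R X i) ** C = (\<Sum>i\<in>I. c i *\<^sub>R (A ** X i ** C))"
  by (induction I rule: infinite_finite_induct)
    (auto simp: matrix_add_ldistrib matrix_add_rdistrib matrix_scalar_ac scalar_matrix_assoc)

lemma mixed_discr_scaled_congruence:
  fixes X :: "'n::finite \<Rightarrow> real^'n^'n" and T :: "real^'n^'n"
  shows "mixed_discr (\<lambda>i. \<tau> i *\<^sub>R (transpose T ** X i ** T)) =
    (\<Prod>i\<in>UNIV. \<tau> i) * det T ^ 2 * mixed_discr X"
proof -
  define M :: "(('n \<Rightarrow> 'n) \<times> ('n \<Rightarrow> 'n)) set" where "M = {\<sigma>. \<sigma> permutes UNIV} \<times> UNIV"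
  define a where "a = (\<lambda>(\<sigma>, \<pi>). of_int (sign \<sigma>) * (\<Prod>k\<in>UNIV. X (\<pi> k) $ k $ \<sigma> k))"
  define c :: "('n \<Rightarrow> 'n) \<times> ('n \<Rightarrow> 'n) \<Rightarrow> 'n \<Rightarrow> nat" where "c = (\<lambda>(\<sigma>, \<pi>) j. card {k. \<pi> k = j})"
  have fin: "finite M" by (simp add: M_def)
  have det_X: "(\<lambda>t. det (\<Sum>i\<in>UNIV. t $ i *\<^sub>R X i)) = monom_sum M a c"
    unfolding M_def a_def c_def by (rule det_sum_scaleR_eq_monom_sum)
  have "det (\<Sum>i\<in>UNIV. t $ i *\<^sub>R (\<tau> i *\<^sub>R (transpose T ** X i ** T))) =
      monom_sum M (\<lambda>m. det T ^ 2 * (a m * (\<Prod>j\<in>UNIV. \<tau> j ^ c m j))) c t" for t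
  proof -
    have "(\<Sum>i\<in>UNIV. t $ i *\<^sub>R (\<tau> i *\<^sub>R (transpose T ** X i ** T))) =
        transpose T ** (\<Sum>i\<in>UNIV. (\<chi> i. \<tau> i * t $ i) $ i *\<^sub>R X i) ** T"
      by (simp add: matrix_mult_sum_scaleR_mult mult.commute)
    then have "det (\<Sum>i\<in>UNIV. t $ i *\<^sub>R (\<tau> i *\<^sub>R (transpose T ** X i ** T))) =
        det T ^ 2 * monom_sum M a c (\<chi> i. \<tau> i * t $ i)"
      by (simp add: det_mul power2_eq_square fun_cong[OF det_X, symmetric])
    then show ?thesis
      unfolding monom_sum_scale by (simp add: monom_sum_def sum_distrib_left mult_ac)
  qed
  then have "mixed_discr (\<lambda>i. \<tau> i *\<^sub>R (transpose T ** X i ** T)) =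
      (\<Sum>m\<in>M. if \<forall>j. c m j = 1 then det T ^ 2 * (a m * (\<Prod>j\<in>UNIV. \<tau> j ^ c m j)) else 0)"
    by (intro mixed_discr_monom_sum fin ext)
  also have "\<dots> = (\<Prod>i\<in>UNIV. \<tau> i) * det T ^ 2 * (\<Sum>m\<in>M. if \<forall>j. c m j = 1 then a m else 0)"
    by (simp add: sum_distrib_left if_distrib[of "\<lambda>x. _ * x"] mult_ac cong: if_cong)
  also have "\<dots> = (\<Prod>i\<in>UNIV. \<tau> i) * det T ^ 2 * mixed_discr X"
    by (simp add: mixed_discr_monom_sum[OF fin det_X])
  finally show ?thesis .
qed

section \<open>Nonnegativity for Gram matrices\<close>

lemma det_square_permutation_expansion:
  fixes U :: "real^'n::finite^'n"
  shows "(\<Sum>\<pi>\<in>{\<pi>. \<pi> permutes UNIV}. \<Sum>\<sigma>\<in>{\<sigma>. \<sigma> permutes UNIV}.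
      of_int (sign \<sigma>) * (\<Prod>k\<in>UNIV. U $ \<pi> k $ k * U $ \<pi> k $ \<sigma> k)) = det U ^ 2"
proof -
  have "(\<Sum>\<pi>\<in>{\<pi>. \<pi> permutes UNIV}. \<Sum>\<sigma>\<in>{\<sigma>. \<sigma> permutes UNIV}.
      of_int (sign \<sigma>) * (\<Prod>k\<in>UNIV. U $ \<pi> k $ k * U $ \<pi> k $ \<sigma> k)) =
    (\<Sum>\<pi>\<in>{\<pi>. \<pi> permutes UNIV}. (\<Prod>k\<in>UNIV. U $ \<pi> k $ k) * det (\<chi> k. U $ \<pi> k))"
    unfolding det_def by (simp add: sum_distrib_left prod.distrib mult_ac)
  also have "\<dots> = (\<Sum>\<pi>\<in>{\<pi>. \<pi> permutes UNIV}. (\<Prod>k\<in>UNIV. U $ \<pi> k $ k) * (of_int (sign \<pi>) * det U))"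
    by (intro sum.cong refl) (simp add: det_permute_rows)
  also have "\<dots> = det U * det (transpose U)"
    unfolding det_def[of "transpose U"] by (simp add: sum_distrib_left transpose_def mult_ac)
  finally show ?thesis by (simp add: power2_eq_square)
qed

text \<open>Expanding every \<open>X i = \<Sum>l. w i l w i l\<^sup>T\<close> and choosing one summand \<open>\<kappa> i\<close> per matrix
  writes \<open>mixed_discr X\<close> as \<open>\<Sum>\<kappa>. (det U\<^sub>\<kappa>)\<^sup>2\<close>, where \<open>U\<^sub>\<kappa>\<close> has rows \<open>w i (\<kappa> i)\<close>.\<close>

lemma mixed_discr_nonneg_gram:
  fixes X :: "'n::finite \<Rightarrow> real^'n^'n" and w :: "'n \<Rightarrow> 'n \<Rightarrow> real^'n"
  assumes X: "\<And>i a b. X i $ a $ b = (\<Sum>l\<in>UNIV. w i l $ a * w i l $ b)"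
  shows "mixed_discr X \<ge> 0"
proof -
  define U :: "('n \<Rightarrow> 'n) \<Rightarrow> real^'n^'n" where "U \<kappa> = (\<chi> i. w i (\<kappa> i))" for \<kappa>
  have expand: "(\<Prod>k\<in>UNIV. X (\<pi> k) $ k $ \<sigma> k) =
      (\<Sum>\<kappa>\<in>UNIV. \<Prod>k\<in>UNIV. U \<kappa> $ \<pi> k $ k * U \<kappa> $ \<pi> k $ \<sigma> k)"
    if \<pi>: "\<pi> permutes UNIV" for \<pi> \<sigma> :: "'n \<Rightarrow> 'n"
  proof -
    have "(\<Prod>k\<in>UNIV. X (\<pi> k) $ k $ \<sigma> k) = (\<Prod>i\<in>UNIV. X i $ inv \<pi> i $ \<sigma> (inv \<pi> i))"
      using prod.permutes_inv[OF \<pi>, of "\<lambda>i k. X i $ k $ \<sigma> k"] by simp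
    also have "\<dots> = (\<Sum>\<kappa>\<in>UNIV. \<Prod>i\<in>UNIV. w i (\<kappa> i) $ inv \<pi> i * w i (\<kappa> i) $ \<sigma> (inv \<pi> i))"
      by (simp add: X prod_sum_PiE)
    also have "\<dots> = (\<Sum>\<kappa>\<in>UNIV. \<Prod>k\<in>UNIV. U \<kappa> $ \<pi> k $ k * U \<kappa> $ \<pi> k $ \<sigma> k)"
      using prod.permutes_inv[OF \<pi>, of "\<lambda>i k. w i (_ i) $ k * w i (_ i) $ \<sigma> k"]
      by (simp add: U_def)
    finally show ?thesis .
  qed
  have "mixed_discr X = (\<Sum>\<pi>\<in>{\<pi>. \<pi> permutes UNIV}. \<Sum>\<sigma>\<in>{\<sigma>. \<sigma> permutes UNIV}. \<Sum>\<kappa>\<in>UNIV.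
      of_int (sign \<sigma>) * (\<Prod>k\<in>UNIV. U \<kappa> $ \<pi> k $ k * U \<kappa> $ \<pi> k $ \<sigma> k))"
    unfolding mixed_discr_permutation_expansion
    by (intro sum.cong refl) (simp add: expand sum_distrib_left)
  also have "\<dots> = (\<Sum>\<kappa>\<in>UNIV. \<Sum>\<pi>\<in>{\<pi>. \<pi> permutes UNIV}. \<Sum>\<sigma>\<in>{\<sigma>. \<sigma> permutes UNIV}.
      of_int (sign \<sigma>) * (\<Prod>k\<in>UNIV. U \<kappa> $ \<pi> k $ k * U \<kappa> $ \<pi> k $ \<sigma> k))"
    by (subst sum.swap[where A = UNIV], rule sum.cong[OF refl], rule sum.swap)
  also have "\<dots> = (\<Sum>\<kappa>\<in>UNIV. det (U \<kappa>) ^ 2)"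
    by (simp only: det_square_permutation_expansion)
  finally show ?thesis
    by (simp add: sum_nonneg)
qed

section \<open>Spectral theorem for real symmetric matrices\<close>

lemma inner_matrix_vector_symmetric:
  fixes A :: "real^'n::finite^'n"
  assumes "transpose A = A"
  shows "x \<bullet> (A *v y) = (A *v x) \<bullet> y"
  by (metis assms dot_lmul_matrix transpose_matrix_vector)

lemma linear_coeff_eq_0_if_quadratic_nonneg:
  fixes c d :: real
  assumes "\<And>s. 0 \<le> c * s + d * s\<^sup>2"
  shows "c = 0"
proof (rule ccontr)
  assume "c \<noteq> 0"
  define m where "m = \<bar>d\<bar> + 1"
  have m: "m > 0" "d - m < 0" unfolding m_def by auto
  have "c * (- c / m) + d * (- c / m)\<^sup>2 = c\<^sup>2 / m\<^sup>2 * (d - m)"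
    using m by (simp add: field_simps power2_eq_square)
  also have "\<dots> < 0"
    using \<open>c \<noteq> 0\<close> m by (intro mult_pos_neg) auto
  finally show False using assms[of "- c / m"] by simp
qed

lemma rayleigh_maximizer_eigenvector:
  fixes A :: "real^'n::finite^'n"
  assumes sym: "transpose A = A" and V: "subspace V" and inv: "\<forall>x\<in>V. A *v x \<in> V"
    and v: "v \<in> V" "v \<bullet> v = 1"
    and max: "\<And>y. y \<in> V \<Longrightarrow> y \<bullet> (A *v y) \<le> (v \<bullet> (A *v v)) * (y \<bullet> y)"
  shows "A *v v = (v \<bullet> (A *v v)) *\<^sub>R v"
proof -
  define l where "l = v \<bullet> (A *v v)"
  have first_variation: "l * (v \<bullet> w) = w \<bullet> (A *v v)" if w: "w \<in> V" for w
  proof -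
    \<comment> \<open>maximality of \<open>v\<close> tested at \<open>v + s w\<close>\<close>
    have "0 \<le> (2 * (l * (v \<bullet> w) - w \<bullet> (A *v v))) * s + (l * (w \<bullet> w) - w \<bullet> (A *v w)) * s\<^sup>2" for s
    proof -
      have "v + s *\<^sub>R w \<in> V" using V v w by (simp add: subspace_add subspace_scale)
      from max[OF this] show ?thesis
        using inner_matrix_vector_symmetric[OF sym, of v w] v(2)
        by (simp add: l_def matrix_vector_right_distrib matrix_vector_mult_scaleR inner_add_left
            inner_add_right power2_eq_square algebra_simps inner_commute)
    qed
    then have "2 * (l * (v \<bullet> w) - w \<bullet> (A *v v)) = 0"
      by (rule linear_coeff_eq_0_if_quadratic_nonneg)
    then show ?thesis by simp
  qed
  define r where "r = l *\<^sub>R v - A *v v"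
  have "r \<in> V" using V v inv by (simp add: r_def subspace_diff subspace_scale)
  have "r \<bullet> r = r \<bullet> (l *\<^sub>R v) - r \<bullet> (A *v v)"
    by (subst (2) r_def) (rule inner_diff_right)
  also have "\<dots> = 0"
    using first_variation[OF \<open>r \<in> V\<close>] by (simp add: inner_commute[of r v])
  finally have "r \<bullet> r = 0" .
  then show ?thesis by (simp add: r_def l_def)
qed

lemma invariant_subspace_has_eigenvector:
  fixes A :: "real^'n::finite^'n"
  assumes sym: "transpose A = A" and V: "subspace V" "V \<noteq> {0}" and inv: "\<forall>x\<in>V. A *v x \<in> V"
  shows "\<exists>v l. v \<in> V \<and> norm v = 1 \<and> A *v v = l *\<^sub>R v"
proof -
  define K where "K = V \<inter> sphere 0 1"
  have normalize: "(1 / norm y) *\<^sub>R y \<in> K" if "y \<in> V" "y \<noteq> 0" for y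
    using that V(1) by (simp add: K_def subspace_scale)
  obtain y where "y \<in> V" "y \<noteq> 0"
    using V subspace_0 by blast
  then have "K \<noteq> {}"
    using normalize by blast
  moreover have "compact K"
    unfolding K_def by (metis Int_commute closed_subspace V(1) compact_Int_closed compact_sphere)
  moreover have "continuous_on K (\<lambda>x. x \<bullet> (A *v x))"
    by (intro continuous_intros linear_continuous_on matrix_vector_mul_bounded_linear)
  ultimately have "\<exists>v\<in>K. \<forall>y\<in>K. y \<bullet> (A *v y) \<le> v \<bullet> (A *v v)"
    by (intro continuous_attains_sup)
  then obtain v where v: "v \<in> K" and vmax: "\<And>y. y \<in> K \<Longrightarrow> y \<bullet> (A *v y) \<le> v \<bullet> (A *v v)"
    by blast
  have "y \<bullet> (A *v y) \<le> (v \<bullet> (A *v v)) * (y \<bullet> y)" if "y \<in> V" for y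
  proof (cases "y = 0")
    case False
    have "(y \<bullet> (A *v y)) / (norm y)\<^sup>2 \<le> v \<bullet> (A *v v)"
      using vmax[OF normalize[OF that False]]
      by (simp add: matrix_vector_mult_scaleR power2_eq_square)
    moreover have "y \<bullet> y = (norm y)\<^sup>2" "(norm y)\<^sup>2 > 0"
      using False by (simp_all add: power2_norm_eq_inner)
    ultimately show ?thesis
      by (simp add: divide_le_eq mult.commute)
  qed simp
  then have "A *v v = (v \<bullet> (A *v v)) *\<^sub>R v"
    using v by (intro rayleigh_maximizer_eigenvector[OF sym V(1) inv]) (auto simp: K_def norm_eq_1)
  with v show ?thesis by (auto simp: K_def)
qed

lemma orthonormal_eigenvectors_of_invariant_subspace:
  fixes A :: "real^'n::finite^'n"
  assumes sym: "transpose A = A"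
  shows "subspace V \<Longrightarrow> \<forall>x\<in>V. A *v x \<in> V \<Longrightarrow> dim V = d \<Longrightarrow>
    \<exists>E\<subseteq>V. finite E \<and> card E = d \<and> pairwise orthogonal E \<and>
      (\<forall>e\<in>E. norm e = 1 \<and> (\<exists>l. A *v e = l *\<^sub>R e))"
proof (induction d arbitrary: V)
  case 0
  then show ?case by (intro exI[of _ "{}"]) auto
next
  case (Suc d)
  then have "V \<noteq> {0}" by auto
  then obtain v l where v: "v \<in> V" "norm v = 1" and Av: "A *v v = l *\<^sub>R v"
    using invariant_subspace_has_eigenvector[OF sym Suc.prems(1) _ Suc.prems(2)] by blast
  define W where "W = {y \<in> V. \<forall>x\<in>span {v}. orthogonal x y}"
  have W: "y \<in> W \<longleftrightarrow> y \<in> V \<and> v \<bullet> y = 0" for y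
    by (auto simp: W_def span_singleton orthogonal_def)
  have "subspace W"
    using subspace_inter[OF Suc.prems(1) subspace_orthogonal_to_vectors, of "span {v}"]
    by (simp add: W_def Collect_conj_eq)
  moreover have "\<forall>y\<in>W. A *v y \<in> W"
    using W Suc.prems(2) inner_matrix_vector_symmetric[OF sym, of v] Av by simp
  moreover have "dim W = d"
  proof -
    have "span {v} \<subseteq> V" "v \<noteq> 0" using v Suc.prems(1) by (auto simp: span_minimal)
    then show ?thesis
      using dim_subspace_orthogonal_to_vectors[OF subspace_span Suc.prems(1), of "{v}"] v Suc.prems(3)
      by (auto simp: W_def)
  qed
  ultimately obtain E where E: "E \<subseteq> W" "finite E" "card E = d" "pairwise orthogonal E"
      "\<forall>e\<in>E. norm e = 1 \<and> (\<exists>l. A *v e = l *\<^sub>R e)"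
    using Suc.IH by blast
  have orth_v: "e \<in> E \<Longrightarrow> orthogonal v e \<and> orthogonal e v" for e
    using E(1) W by (auto simp: orthogonal_def inner_commute)
  then have "v \<notin> E"
    using v(2) by (metis orthogonal_self norm_zero zero_neq_one)
  with E v Av orth_v W show ?case
    by (intro exI[of _ "insert v E"]) (auto simp: pairwise_insert)
qed

definition diag_mat :: "('n::finite \<Rightarrow> real) \<Rightarrow> real^'n^'n" where
  "diag_mat d = (\<chi> i j. if i = j then d i else 0)"

lemma diag_mat_vector_mult: "(diag_mat d *v x) $ i = d i * x $ i"
  by (simp add: diag_mat_def matrix_vector_mult_def if_distrib[of "\<lambda>y. y * _"] cong: if_cong)

lemma matrix_mult_diag_mat: "(A ** diag_mat d) $ i $ j = A $ i $ j * d j"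
  by (simp add: diag_mat_def matrix_matrix_mult_def if_distrib[of "\<lambda>y. _ * y"] cong: if_cong)

theorem symmetric_matrix_orthogonal_diagonalization:
  fixes A :: "real^'n::finite^'n"
  assumes "transpose A = A"
  obtains P :: "real^'n^'n" and lam :: "'n \<Rightarrow> real"
  where "orthogonal_matrix P" "A ** P = P ** diag_mat lam"
proof -
  obtain E where E: "finite E" "card E = CARD('n)" "pairwise orthogonal E"
      "\<forall>e\<in>E. norm e = 1 \<and> (\<exists>l. A *v e = l *\<^sub>R e)"
    using orthonormal_eigenvectors_of_invariant_subspace[OF assms, of UNIV "CARD('n)"] by auto
  then obtain f where f: "bij_betw f (UNIV :: 'n set) E"
    by (metis finite_class.finite_UNIV finite_same_card_bij card_UNIV)
  then have fE: "f i \<in> E" for i by (auto simp: bij_betw_def)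
  define lam where "lam i = (SOME l. A *v f i = l *\<^sub>R f i)" for i
  have eig: "A *v f i = lam i *\<^sub>R f i" for i
    unfolding lam_def using E(4) fE by (metis (mono_tags) someI_ex)
  define P :: "real^'n^'n" where "P = (\<chi> i j. f j $ i)"
  show thesis
  proof
    have "norm (f i) = 1" for i using E(4) fE by blast
    moreover have "orthogonal (f i) (f j)" if "i \<noteq> j" for i j
    proof -
      have "f i \<noteq> f j" using f that by (metis bij_betw_imp_inj_on injD)
      then show ?thesis using E(3) fE unfolding pairwise_def by blast
    qed
    ultimately show "orthogonal_matrix P"
      by (simp add: P_def orthogonal_matrix_orthonormal_columns column_def)
    have "(A ** P) $ i $ j = (A *v f j) $ i" for i j
      by (simp add: P_def matrix_matrix_mult_def matrix_vector_mult_def)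
    then show "A ** P = P ** diag_mat lam"
      by (simp add: vec_eq_iff eig matrix_mult_diag_mat P_def mult.commute)
  qed
qed

section \<open>Positive definite matrices\<close>

lemma pos_def_sym_orthogonal_diagonalization:
  fixes A :: "real^'n::finite^'n"
  assumes pd: "pos_def_sym A"
  obtains P :: "real^'n^'n" and lam :: "'n \<Rightarrow> real"
  where "orthogonal_matrix P" "A = P ** diag_mat lam ** transpose P" "\<And>l. lam l > 0"
proof -
  obtain P lam where P: "orthogonal_matrix P" and AP: "A ** P = P ** diag_mat lam"
    using symmetric_matrix_orthogonal_diagonalization pd unfolding pos_def_sym_def by blast
  have PP: "P ** transpose P = mat 1" "transpose P ** P = mat 1"
    using P by (simp_all add: orthogonal_matrix_def)
  have "A = A ** (P ** transpose P)"
    using PP by simp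
  also have "\<dots> = P ** diag_mat lam ** transpose P"
    by (simp add: matrix_mul_assoc AP)
  finally have A: "A = P ** diag_mat lam ** transpose P" .
  have "lam l > 0" for l
  proof -
    define x where "x = P *v axis l 1"
    have Ptx: "transpose P *v x = axis l 1"
      using PP by (simp add: x_def matrix_vector_mul_assoc)
    then have "x \<noteq> 0" by (auto simp: axis_eq_0_iff)
    then have "0 < x \<bullet> (A *v x)"
      using pd by (simp add: pos_def_sym_def)
    also have "x \<bullet> (A *v x) = (transpose P *v x) \<bullet> (diag_mat lam *v (transpose P *v x))"
      unfolding A by (simp add: matrix_vector_mul_assoc[symmetric] dot_lmul_matrix[symmetric])
    also have "\<dots> = lam l"
      unfolding Ptx by (simp add: inner_axis' diag_mat_vector_mult)
    finally show ?thesis .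
  qed
  with P A show thesis ..
qed

lemma pos_def_sym_eigenvalues:
  fixes A :: "real^'n::finite^'n"
  assumes "pos_def_sym A"
  obtains lam :: "'n \<Rightarrow> real"
  where "\<And>l. lam l > 0" "det A = (\<Prod>l\<in>UNIV. lam l)" "trace A = (\<Sum>l\<in>UNIV. lam l)"
proof -
  obtain P lam where P: "orthogonal_matrix P" and A: "A = P ** diag_mat lam ** transpose P"
      and pos: "\<And>l. lam l > 0"
    using pos_def_sym_orthogonal_diagonalization[OF assms] by blast
  have "det P * det P = 1"
    using det_orthogonal_matrix[OF P] by auto
  then have "det A = det (diag_mat lam)"
    unfolding A by (simp add: det_mul)
  also have "\<dots> = (\<Prod>l\<in>UNIV. lam l)"
    by (subst det_diagonal) (simp_all add: diag_mat_def)
  finally have det: "det A = (\<Prod>l\<in>UNIV. lam l)" .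
  have "trace A = trace (transpose P ** (P ** diag_mat lam))"
    unfolding A by (rule trace_mul_sym)
  also have "\<dots> = (\<Sum>l\<in>UNIV. lam l)"
    using P by (simp add: matrix_mul_assoc orthogonal_matrix trace_def diag_mat_def)
  finally show thesis
    using pos det by (intro that)
qed

lemma pos_def_sym_det_pos:
  fixes A :: "real^'n::finite^'n"
  assumes "pos_def_sym A"
  shows "det A > 0"
proof -
  obtain lam :: "'n \<Rightarrow> real" where "\<And>l. lam l > 0" "det A = (\<Prod>l\<in>UNIV. lam l)"
    using pos_def_sym_eigenvalues[OF assms] by blast
  then show ?thesis by (simp add: prod_pos)
qed

lemma pos_def_sym_ln_det_le_trace:
  fixes A :: "real^'n::finite^'n"
  assumes "pos_def_sym A"
  shows "ln (det A) \<le> trace A - real CARD('n)"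
proof -
  obtain lam :: "'n \<Rightarrow> real" where pos: "\<And>l. lam l > 0" and A: "det A = (\<Prod>l\<in>UNIV. lam l)" "trace A = (\<Sum>l\<in>UNIV. lam l)"
    using pos_def_sym_eigenvalues[OF assms] by blast
  have "ln (det A) = (\<Sum>l\<in>UNIV. ln (lam l))"
    unfolding A using pos by (simp add: ln_prod less_imp_neq[symmetric])
  also have "\<dots> \<le> (\<Sum>l\<in>UNIV. lam l - 1)"
    by (intro sum_mono ln_le_minus_one pos)
  also have "\<dots> = trace A - real CARD('n)"
    by (simp add: A sum_subtractf)
  finally show ?thesis .
qed

lemma pos_def_sym_gram:
  fixes A :: "real^'n::finite^'n"
  assumes "pos_def_sym A"
  obtains w :: "'n \<Rightarrow> real^'n" where "\<And>a b. A $ a $ b = (\<Sum>l\<in>UNIV. w l $ a * w l $ b)"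
proof -
  obtain P :: "real^'n^'n" and lam where A: "A = P ** diag_mat lam ** transpose P"
      and pos: "\<And>l. lam l > 0"
    using pos_def_sym_orthogonal_diagonalization[OF assms] by blast
  have "A $ a $ b = (\<Sum>l\<in>UNIV. (sqrt (lam l) *\<^sub>R column l P) $ a * (sqrt (lam l) *\<^sub>R column l P) $ b)"
    for a b
  proof -
    have "A $ a $ b = (\<Sum>l\<in>UNIV. P $ a $ l * lam l * P $ b $ l)"
      unfolding A matrix_matrix_mult_def[of "P ** diag_mat lam"]
      by (simp add: matrix_mult_diag_mat transpose_def)
    also have "\<dots> = (\<Sum>l\<in>UNIV. (sqrt (lam l) *\<^sub>R column l P) $ a * (sqrt (lam l) *\<^sub>R column l P) $ b)"
      using pos by (intro sum.cong refl) (simp add: column_def mult_ac less_imp_le)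
    finally show ?thesis .
  qed
  then show thesis ..
qed

lemma mixed_discr_nonneg:
  fixes Q :: "'n::finite \<Rightarrow> real^'n^'n"
  assumes "\<And>i. pos_def_sym (Q i)"
  shows "mixed_discr Q \<ge> 0"
proof -
  have "\<exists>w :: 'n \<Rightarrow> real^'n. \<forall>a b. Q i $ a $ b = (\<Sum>l\<in>UNIV. w l $ a * w l $ b)" for i
    using pos_def_sym_gram[OF assms] by blast
  then obtain w :: "'n \<Rightarrow> 'n \<Rightarrow> real^'n"
    where "\<forall>i a b. Q i $ a $ b = (\<Sum>l\<in>UNIV. w i l $ a * w i l $ b)"
    by metis
  then show ?thesis
    by (intro mixed_discr_nonneg_gram[of Q w]) blast
qed

lemma inner_sum_scaleR_matrix_vector:
  fixes M :: "'i \<Rightarrow> real^'n::finite^'n"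
  shows "x \<bullet> ((\<Sum>i\<in>I. c i *\<^sub>R M i) *v x) = (\<Sum>i\<in>I. c i * (x \<bullet> (M i *v x)))"
  by (induction I rule: infinite_finite_induct)
    (simp_all add: matrix_vector_mult_add_rdistrib inner_add_right scaleR_matrix_vector_assoc[symmetric])

lemma pos_def_sym_sum:
  fixes Q :: "'i \<Rightarrow> real^'n::finite^'n"
  assumes "finite I" "I \<noteq> {}" "\<And>i. i \<in> I \<Longrightarrow> pos_def_sym (Q i)" "\<And>i. i \<in> I \<Longrightarrow> c i > 0"
  shows "pos_def_sym (\<Sum>i\<in>I. c i *\<^sub>R Q i)"
  unfolding pos_def_sym_def
proof (intro conjI allI impI)
  have "transpose (Q i) = Q i" if "i \<in> I" for i
    using assms(3)[OF that] by (simp add: pos_def_sym_def)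
  then show "transpose (\<Sum>i\<in>I. c i *\<^sub>R Q i) = (\<Sum>i\<in>I. c i *\<^sub>R Q i)"
    by (simp add: vec_eq_iff transpose_def)
  show "x \<bullet> ((\<Sum>i\<in>I. c i *\<^sub>R Q i) *v x) > 0" if "x \<noteq> 0" for x
    unfolding inner_sum_scaleR_matrix_vector
    using assms that by (intro sum_pos) (auto simp: pos_def_sym_def)
qed

lemma trace_sum: "trace (\<Sum>i\<in>I. A i) = (\<Sum>i\<in>I. trace (A i :: real^'n::finite^'n))"
  unfolding trace_def sum_component by (rule sum.swap)

lemma det_matrix_inv_square_ge_1:
  fixes S :: "real^'n::finite^'n"
  assumes "0 < det (transpose S ** S)" and "det (transpose S ** S) \<le> 1"
  shows "det (matrix_inv S) ^ 2 \<ge> 1"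
proof -
  have det_S: "det (transpose S ** S) = det S ^ 2"
    by (simp add: det_mul power2_eq_square)
  then have "invertible S"
    using assms(1) by (simp add: invertible_det_nz)
  then have "S ** matrix_inv S = mat 1"
    unfolding invertible_def matrix_inv_def by (rule someI2_ex) auto
  then have "det (matrix_inv S) ^ 2 * det (transpose S ** S) = 1"
    unfolding det_S by (metis det_I det_mul power_mult_distrib mult.commute power_one)
  then have "det (matrix_inv S) ^ 2 = 1 / det (transpose S ** S)"
    using assms(1) by (simp add: eq_divide_eq)
  with assms show ?thesis
    by (simp add: le_divide_eq)
qed

theorem lemma2p2:
  fixes Q :: "'n::finite \<Rightarrow> real^'n^'n"
    and f :: "real^'n \<Rightarrow> real"
    and H :: "(real^'n) set"
    and \<xi> :: "real^'n"
    and S T :: "real^'n^'n"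
    and \<tau> :: "'n \<Rightarrow> real"
    and B :: "'n \<Rightarrow> real^'n^'n"
  assumes pd: "\<And>i. pos_def_sym (Q i)"
    and tr: "(\<Sum>i\<in>UNIV. trace (Q i)) = real CARD('n)"
    and H_def: "H = {x. (\<Sum>i\<in>UNIV. x $ i) = 0}"
    and f_def: "f = (\<lambda>x. ln (det (\<Sum>i\<in>UNIV. exp (x $ i) *\<^sub>R Q i)))"
    and xi_H: "\<xi> \<in> H"
    and xi_min: "\<forall>x\<in>H. f \<xi> \<le> f x"
    and S_def: "transpose S ** S = (\<Sum>i\<in>UNIV. exp (\<xi> $ i) *\<^sub>R Q i)"
    and T_def: "T = matrix_inv S"
    and tau_def: "\<And>i. \<tau> i = exp (\<xi> $ i)"
    and B_def: "\<And>i. B i = \<tau> i *\<^sub>R (transpose T ** Q i ** T)"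
  shows "mixed_discr B \<ge> mixed_discr Q"
proof -
  let ?M = "\<Sum>i\<in>UNIV. exp (\<xi> $ i) *\<^sub>R Q i"
  have pd_M: "pos_def_sym ?M"
    by (intro pos_def_sym_sum) (simp_all add: pd)
  have pd_sum: "pos_def_sym (\<Sum>i\<in>UNIV. Q i)"
    using pos_def_sym_sum[of UNIV Q "\<lambda>_. 1"] by (simp add: pd)
  have "f \<xi> \<le> f 0"
    using xi_min by (simp add: H_def)
  then have "ln (det ?M) \<le> ln (det (\<Sum>i\<in>UNIV. Q i))"
    by (simp add: f_def)
  also have "\<dots> \<le> 0"
    using pos_def_sym_ln_det_le_trace[OF pd_sum] by (simp add: trace_sum tr)
  finally have "det ?M \<le> 1"
    using pos_def_sym_det_pos[OF pd_M] by simp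
  then have det_T: "det T ^ 2 \<ge> 1"
    unfolding T_def using det_matrix_inv_square_ge_1[of S] S_def pos_def_sym_det_pos[OF pd_M] by simp
  have "(\<Prod>i\<in>UNIV. \<tau> i) = 1"
    using xi_H by (simp add: H_def tau_def exp_sum[symmetric])
  then have "mixed_discr B = det T ^ 2 * mixed_discr Q"
    using mixed_discr_scaled_congruence[of \<tau> T Q] by (simp add: B_def[abs_def])
  then show ?thesis
    using det_T mixed_discr_nonneg[of Q] pd by (simp add: mult_le_cancel_right1)
qed

end
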